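(* Fix an integer $p\ge 0$ and a subinterval $I_n=[t_n,t_{n+1}]$ of a partition of $[0,T]$, with initial value $u_n=u(t_n)$. Let $U_h=[u_h(t_{n,0}),\dots,u_h(t_{n,p})]^T$ be the nodal values of the DG approximation on $I_n$, i.e. the solution of $LU_h+\frac{\Delta t_n}{2}F(U_h)+B=0$. Consider the fixed-point iteration $$U^{k+1}=-\frac{\Delta t_n}{2}L^{-1}F(U^k)-L^{-1}B,\qquad k=0,1,\dots,$$ where $F$ is the exactly integrated nonlinear vector, and $U^0$ is the explicit-Euler initial iterate. Then for every $K\ge 0$, $$u_h(t_{n,m})-u^K_{n,m}=\mathcal{O}\left(h^{K+2}\right),\qquad m=0,\dots,p,$$ as $h=\max_n\Delta t_n\to 0$, where $U^K=[u^K_{n,0},\dots,u^K_{n,p}]^T$.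
   Context: Initial value problem: $u'(t)=f(t,u(t))$ for $t\in[0,T]$, $u(0)=u_0\in\mathbb{R}$, with $f:\mathbb{R}\times\mathbb{R}\to\mathbb{R}$ sufficiently smooth (of class $\mathcal{C}^{2p+1}$) and Lipschitz in $u$; $u$ denotes the exact solution. Partition $0=t_0<t_1<\dots<t_N=T$, $I_n=[t_n,t_{n+1}]$, $\Delta t_n=t_{n+1}-t_n$, $h=\max_n\Delta t_n$. On the reference interval $[-1,1]$ let $-1<\tau_0<\tau_1<\dots<\tau_p=1$ be the $p+1$ right Gauss–Radau points (including the right endpoint; the quadrature $\int_{-1}^1 g\approx\sum_j\omega_j g(\tau_j)$ with the corresponding weights $\omega_j$ is exact for polynomials of degree $\le 2p$), and $\ell_0,\dots,\ell_p$ the Lagrange polynomials of degree $p$ with $\ell_i(\tau_j)=\delta_{ij}$. Nodes on $I_n$: $t_{n,m}=t_n+\frac{(\tau_m+1)\Delta t_n}{2}$, so $t_{n,p}=t_{n+1}$. Define the $(p+1)\times(p+1)$ matrix $L_{i,j}=\int_{-1}^1\ell_i'(\tau)\ell_j(\tau)\,d\tau-\delta_{ip}\delta_{jp}$ (invertible), the vector $B=u_n[\ell_0(-1),\dots,\ell_p(-1)]^T$, and for $U=[u_{n,0},\dots,u_{n,p}]^T$ the vectors $F(U)_j=\int_{-1}^1 f\big(t_n+\tfrac{(\tau+1)\Delta t_n}{2},\sum_{m=0}^p u_{n,m}\ell_m(\tau)\big)\ell_j(\tau)\,d\tau$ and $F_\omega(U)_j=\omega_j f(t_{n,j},u_{n,j})$,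 $j=0,\dots,p$. The DG approximation $u_h$ on $I_n$ is the degree-$p$ polynomial $u_h(t)=\sum_m u_h(t_{n,m})\ell_m(\tau)$ ($t=t_n+\frac{(\tau+1)\Delta t_n}{2}$) whose nodal vector $U_h$ solves $LU_h+\frac{\Delta t_n}{2}F(U_h)+B=0$ (exists uniquely for $h$ small); the DG step value is $u_{n+1}=u_h(t_{n,p})$. The explicit-Euler initial iterate is $u^0_{n,0}=u_n+(t_{n,0}-t_n)f(t_n,u_n)$, $u^0_{n,m+1}=u^0_{n,m}+(t_{n,m+1}-t_{n,m})f(t_{n,m},u^0_{n,m})$; the implicit-Euler initial iterate is $u^0_{n,0}=u_n+(t_{n,0}-t_n)f(t_{n,0},u^0_{n,0})$, $u^0_{n,m+1}=u^0_{n,m}+(t_{n,m+1}-t_{n,m})f(t_{n,m+1},u^0_{n,m+1})$. All $\mathcal{O}(\cdot)$ constants are independent of $n$ and $h$. *)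

theory Defs
  imports "HOL-Analysis.Analysis" "HOL-Computational_Algebra.Polynomial"
begin

fun Ck :: "nat \<Rightarrow> (real \<times> real \<Rightarrow> real) \<Rightarrow> bool" where
  "Ck 0 g = continuous_on UNIV g"
| "Ck (Suc k) g = (\<exists>g1 g2. (\<forall>z. (g has_derivative (\<lambda>(a, b). g1 z * a + g2 z * b)) (at z))
                          \<and> Ck k g1 \<and> Ck k g2)"

definition lag :: "(nat \<Rightarrow> real) \<Rightarrow> nat \<Rightarrow> nat \<Rightarrow> real \<Rightarrow> real" where
  "lag tau p i x = (\<Prod>j\<in>{..p} - {i}. (x - tau j) / (tau i - tau j))"

definition Lmat :: "(nat \<Rightarrow> real) \<Rightarrow> nat \<Rightarrow> nat \<Rightarrow> nat \<Rightarrow> real" where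
  "Lmat tau p i j = integral {-1..1} (\<lambda>x. deriv (lag tau p i) x * lag tau p j x)
                    - (if i = p \<and> j = p then 1 else 0)"

definition node :: "(nat \<Rightarrow> real) \<Rightarrow> real \<Rightarrow> real \<Rightarrow> nat \<Rightarrow> real" where
  "node tau tn dt m = tn + (tau m + 1) * dt / 2"

definition Fvec :: "(real \<Rightarrow> real \<Rightarrow> real) \<Rightarrow> (nat \<Rightarrow> real) \<Rightarrow> nat \<Rightarrow> real \<Rightarrow> real
                    \<Rightarrow> (nat \<Rightarrow> real) \<Rightarrow> nat \<Rightarrow> real" where
  "Fvec f tau p tn dt U j = integral {-1..1}
     (\<lambda>x. f (tn + (x + 1) * dt / 2) (\<Sum>m\<le>p. U m * lag tau p m x) * lag tau p j x)"

definition Bvec :: "(nat \<Rightarrow> real) \<Rightarrow> nat \<Rightarrow> real \<Rightarrow> nat \<Rightarrow> real" where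
  "Bvec tau p un j = un * lag tau p j (-1)"

definition dg_solution :: "(real \<Rightarrow> real \<Rightarrow> real) \<Rightarrow> (nat \<Rightarrow> real) \<Rightarrow> nat \<Rightarrow> real \<Rightarrow> real
                           \<Rightarrow> real \<Rightarrow> (nat \<Rightarrow> real) \<Rightarrow> bool" where
  "dg_solution f tau p tn dt un U \<longleftrightarrow>
     (\<forall>i\<le>p. (\<Sum>j\<le>p. Lmat tau p i j * U j) + dt / 2 * Fvec f tau p tn dt U i + Bvec tau p un i = 0)"

definition Linv_apply :: "(nat \<Rightarrow> real) \<Rightarrow> nat \<Rightarrow> (nat \<Rightarrow> real) \<Rightarrow> nat \<Rightarrow> real" where
  "Linv_apply tau p r = (THE V. (\<forall>i\<le>p. (\<Sum>j\<le>p. Lmat tau p i j * V j) = r i) \<and> (\<forall>i>p. V i = 0))"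

fun euler0 :: "(real \<Rightarrow> real \<Rightarrow> real) \<Rightarrow> (nat \<Rightarrow> real) \<Rightarrow> real \<Rightarrow> real \<Rightarrow> real \<Rightarrow> nat \<Rightarrow> real" where
  "euler0 f tau tn dt un 0 = un + (node tau tn dt 0 - tn) * f tn un"
| "euler0 f tau tn dt un (Suc m) = euler0 f tau tn dt un m
     + (node tau tn dt (Suc m) - node tau tn dt m) * f (node tau tn dt m) (euler0 f tau tn dt un m)"

fun fp_iter :: "(real \<Rightarrow> real \<Rightarrow> real) \<Rightarrow> (nat \<Rightarrow> real) \<Rightarrow> nat \<Rightarrow> real \<Rightarrow> real \<Rightarrow> real
                \<Rightarrow> nat \<Rightarrow> nat \<Rightarrow> real" where
  "fp_iter f tau p tn dt un 0 = euler0 f tau tn dt un"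
| "fp_iter f tau p tn dt un (Suc k) =
     (\<lambda>i. - (dt / 2) * Linv_apply tau p (Fvec f tau p tn dt (fp_iter f tau p tn dt un k)) i
          - Linv_apply tau p (Bvec tau p un) i)"

definition mesh :: "nat \<Rightarrow> (nat \<Rightarrow> real) \<Rightarrow> real" where
  "mesh N t = Max ((\<lambda>n. t (Suc n) - t n) ` {..<N})"

end

theory Submission imports Defs "Jordan_Normal_Form.Determinant" begin

text \<open>Testing the quadratic form of \<open>L\<close> against the interpolant \<open>q\<close> of \<open>v\<close> and integrating by parts
  gives \<open>v\<^sup>T L v = -(q(1)\<^sup>2 + q(-1)\<^sup>2)/2\<close>; testing it against \<open>q'\<close> then forces \<open>\<integral> q'\<^sup>2 = 0\<close>, so
  \<open>L\<close> is invertible. Since \<open>L\<close> maps the constant vector \<open>-1\<close> to \<open>B/u\<^sub>n\<close> and \<open>\<tau> + 1\<close> to \<open>-\<integral>\<ell>\<close>, both the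
  DG nodal vector and every iterate satisfy \<open>U = u\<^sub>n - \<Delta>t/2 L\<^sup>-\<^sup>1 F(U')\<close> (with \<open>U' = U\<close>, resp. the
  previous iterate). As \<open>F\<close> inherits a Lipschitz constant \<open>O(1)\<close> from \<open>f\<close>, every iteration gains a
  factor \<open>O(h)\<close>. The start is \<open>O(h\<^sup>2)\<close>: explicit Euler and the DG solution both agree with
  \<open>u\<^sub>n + (t\<^sub>n\<^sub>,\<^sub>m - t\<^sub>n) f(t\<^sub>n, u\<^sub>n)\<close> up to \<open>O(h\<^sup>2)\<close>, the latter because \<open>L\<^sup>-\<^sup>1 \<integral>\<ell> = -(\<tau> + 1)\<close>.\<close>

lemma continuous_on_poly_real: "continuous_on S (poly (q :: real poly))"
  using continuous_on_poly[OF continuous_on_id, of S q] by simp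

lemma integrable_poly_mult_poly: "(\<lambda>x. poly q x * poly r x) integrable_on {a..b::real}"
  for q r :: "real poly"
  by (intro integrable_continuous_interval continuous_on_mult continuous_on_poly_real)

lemma poly_eq_0_if_integral_square_eq_0:
  fixes q :: "real poly"
  assumes "a < b" and "integral {a..b} (\<lambda>x. poly q x * poly q x) = 0"
  shows "q = 0"
proof (rule ccontr)
  assume "q \<noteq> 0"
  have sq_0: "((\<lambda>x. poly q x * poly q x) has_integral 0) (cbox a b)"
    using assms(2) integrable_poly_mult_poly[of q q a b] by (metis box_real(2) has_integral_integral)
  have "poly q x * poly q x = 0" if "x \<in> {a..b}" for x
    by (rule has_integral_0_cbox_imp_0[OF _ _ sq_0])
       (use that assms(1) in \<open>auto intro!: continuous_intros continuous_on_poly_real\<close>)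
  then have "{a..b} \<subseteq> {x. poly q x = 0}" by auto
  moreover have "finite {x. poly q x = 0}" using \<open>q \<noteq> 0\<close> by (rule poly_roots_finite)
  ultimately have "finite {a..b}" by (rule finite_subset)
  then show False using infinite_Icc[OF \<open>a < b\<close>] by simp
qed

lemma integral_pderiv_poly: "integral {-1..1} (poly (pderiv r)) = poly r 1 - poly r (-1)"
  for r :: "real poly"
proof -
  have "(poly r has_vector_derivative poly (pderiv r) x) (at x within {-1..1})" for x
    using has_real_derivative_iff_has_vector_derivative[THEN iffD1, OF poly_DERIV[of r x]]
    by (rule has_vector_derivative_at_within)
  then have "(poly (pderiv r) has_integral poly r 1 - poly r (-1)) {-1..1}"
    by (intro fundamental_theorem_of_calculus) auto
  then show ?thesis by (rule integral_unique)
qed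

lemma integral_pderiv_mult_poly:
  fixes a b :: "real poly"
  shows "integral {-1..1} (\<lambda>x. poly (pderiv a) x * poly b x)
    = poly a 1 * poly b 1 - poly a (-1) * poly b (-1) - integral {-1..1} (\<lambda>x. poly a x * poly (pderiv b) x)"
proof -
  have "(\<lambda>x. poly (pderiv a) x * poly b x) = (\<lambda>x. poly (pderiv (a * b)) x - poly a x * poly (pderiv b) x)"
    by (simp add: fun_eq_iff pderiv_mult algebra_simps)
  moreover have "integral {-1..1} (\<lambda>x. poly (pderiv (a * b)) x - poly a x * poly (pderiv b) x)
     = integral {-1..1} (poly (pderiv (a * b))) - integral {-1..1} (\<lambda>x. poly a x * poly (pderiv b) x)"
    by (intro integral_diff integrable_poly_mult_poly integrable_continuous_interval continuous_on_poly_real)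
  ultimately show ?thesis by (simp add: integral_pderiv_poly)
qed

lemma Ck_imp_continuous_on: "Ck k g \<Longrightarrow> continuous_on UNIV g"
proof (cases k)
  case (Suc k')
  assume "Ck k g"
  then obtain g1 g2 where "\<forall>z. (g has_derivative (\<lambda>(a, b). g1 z * a + g2 z * b)) (at z)"
    using Suc by auto
  then show ?thesis
    by (intro continuous_at_imp_continuous_on) (use has_derivative_continuous in blast)
qed simp

lemma continuous_on_compact_abs_bound:
  fixes g :: "'a::topological_space \<Rightarrow> real"
  assumes "continuous_on S g" "compact S"
  shows "\<exists>B\<ge>0. \<forall>x\<in>S. \<bar>g x\<bar> \<le> B"
proof -
  have "bounded (g ` S)" by (intro compact_imp_bounded compact_continuous_image assms)
  then obtain B where "B > 0" "\<forall>x\<in>S. \<bar>g x\<bar> \<le> B" by (auto simp: bounded_pos)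
  then show ?thesis by (intro exI[of _ B]) auto
qed

lemma Ck_Suc_lipschitz_in_time:
  assumes f: "Ck (Suc k) (\<lambda>(t, x). f t x)"
  shows "\<exists>M\<ge>0. \<forall>t s x. a \<le> t \<longrightarrow> t \<le> s \<longrightarrow> s \<le> b \<longrightarrow> \<bar>x\<bar> \<le> R \<longrightarrow> \<bar>f s x - f t x\<bar> \<le> M * (s - t)"
proof -
  from f obtain g1 g2 where
    der: "\<forall>z. ((\<lambda>(t, x). f t x) has_derivative (\<lambda>(a, b). g1 z * a + g2 z * b)) (at z)"
    and "Ck k g1" by auto
  then have "continuous_on ({a..b} \<times> {-R..R}) g1"
    using Ck_imp_continuous_on continuous_on_subset by blast
  moreover have "compact ({a..b} \<times> {-R..R::real})" by (intro compact_Times compact_Icc)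
  ultimately obtain M where M0: "M \<ge> 0" and M: "\<forall>z\<in>{a..b} \<times> {-R..R}. \<bar>g1 z\<bar> \<le> M"
    using continuous_on_compact_abs_bound by blast
  have dt: "((\<lambda>s. f s x) has_real_derivative g1 (y, x)) (at y)" for x y
    using has_derivative_compose[OF has_derivative_Pair[OF has_derivative_ident has_derivative_const]
        der[rule_format, of "(y, x)"]]
    by (simp add: has_field_derivative_def)
  have "\<bar>f s x - f t x\<bar> \<le> M * (s - t)" if ts: "a \<le> t" "t \<le> s" "s \<le> b" and x: "\<bar>x\<bar> \<le> R" for t s x
  proof (cases "t = s")
    case False
    with ts have "t < s" by simp
    then obtain z where z: "t < z" "z < s" "f s x - f t x = (s - t) * g1 (z, x)"
      using MVT2[of t s "\<lambda>s. f s x" "\<lambda>y. g1 (y, x)"] dt by blast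
    have "(z, x) \<in> {a..b} \<times> {-R..R}" using z ts x by auto
    then have "\<bar>g1 (z, x)\<bar> \<le> M" using M by blast
    then show ?thesis using z ts by (simp add: abs_mult mult.commute mult_left_mono)
  qed simp
  with M0 show ?thesis by blast
qed

lemma abs_integral_le_on_Icc:
  fixes g :: "real \<Rightarrow> real"
  assumes "continuous_on {a..b} g" "a \<le> b" "\<forall>x\<in>{a..b}. \<bar>g x\<bar> \<le> B"
  shows "\<bar>integral {a..b} g\<bar> \<le> (b - a) * B"
  using integral_bound[of a b g B] assms by (simp add: mult.commute)

lemma continuous_on_curried_comp:
  assumes "continuous_on UNIV (\<lambda>(t, x). f t x)" "continuous_on S a" "continuous_on S b"
  shows "continuous_on S (\<lambda>x. f (a x) (b x))"
  using continuous_on_compose2[OF assms(1), of S "\<lambda>x. (a x, b x)"] assms(2,3)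
  by (auto intro: continuous_intros)

lemma partition_step_bounds:
  fixes t :: "nat \<Rightarrow> real"
  assumes "t 0 = 0" "t N = T" "\<forall>n<N. t n < t (Suc n)" "n < N"
  shows "0 \<le> t n" "t (Suc n) \<le> T" "0 < t (Suc n) - t n" "t (Suc n) - t n \<le> mesh N t"
proof -
  have mono: "t i \<le> t j" if "i \<le> j" "j \<le> N" for i j
  proof (rule lift_Suc_mono_le_ivl[of "{..<N}"])
    show "\<And>k. k \<in> {..<N} \<Longrightarrow> t k \<le> t (Suc k)" using assms(3) by (simp add: less_imp_le)
  qed (use that in auto)
  show "0 \<le> t n" using mono[of 0 n] assms by simp
  show "t (Suc n) \<le> T" using mono[of "Suc n" N] assms by simp
  show "0 < t (Suc n) - t n" using assms by simp
  show "t (Suc n) - t n \<le> mesh N t" unfolding mesh_def using assms(4) by (intro Max_ge finite_imageI) auto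
qed

lemma ode_solution_bounds:
  assumes f: "continuous_on UNIV (\<lambda>(t, x). f t x)"
    and u: "\<forall>s\<in>{0..T}. (u has_real_derivative f s (u s)) (at s within {0..T})"
  shows "\<exists>R F. 0 \<le> F \<and> (\<forall>s\<in>{0..T}. \<bar>u s\<bar> \<le> R \<and> \<bar>f s (u s)\<bar> \<le> F)"
proof -
  have u_cont: "continuous_on {0..T} u"
    using u by (auto simp: continuous_on_eq_continuous_within intro: DERIV_continuous)
  then obtain R where "\<forall>s\<in>{0..T}. \<bar>u s\<bar> \<le> R"
    using continuous_on_compact_abs_bound compact_Icc by blast
  moreover have "continuous_on {0..T} (\<lambda>s. f s (u s))"
    using continuous_on_curried_comp[OF f continuous_on_id u_cont] .
  then obtain F where "F \<ge> 0" "\<forall>s\<in>{0..T}. \<bar>f s (u s)\<bar> \<le> F"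
    using continuous_on_compact_abs_bound compact_Icc by blast
  ultimately show ?thesis by blast
qed

locale radau_nodes =
  fixes tau :: "nat \<Rightarrow> real" and p :: nat
  assumes tau_Suc_less: "\<forall>i<p. tau i < tau (Suc i)" and tau_first: "-1 < tau 0" and tau_last: "tau p = 1"
begin

lemma tau_less: "i < j \<Longrightarrow> j \<le> p \<Longrightarrow> tau i < tau j"
proof (induction j)
  case (Suc j)
  then have "tau j < tau (Suc j)" using tau_Suc_less by auto
  then show ?case using Suc by (cases "i = j") auto
qed simp

lemma tau_inj: "i \<le> p \<Longrightarrow> j \<le> p \<Longrightarrow> tau i = tau j \<Longrightarrow> i = j"
  using tau_less by (metis linorder_neqE_nat less_irrefl)

lemma tau_le: "i \<le> j \<Longrightarrow> j \<le> p \<Longrightarrow> tau i \<le> tau j"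
  using tau_less by (metis le_less)

lemma tau_bounds: "i \<le> p \<Longrightarrow> -1 < tau i \<and> tau i \<le> 1"
  using tau_le[of 0 i] tau_le[of i p] tau_first tau_last by auto

definition lagrange_poly :: "nat \<Rightarrow> real poly" where
  "lagrange_poly i = (\<Prod>j\<in>{..p} - {i}. Polynomial.smult (1 / (tau i - tau j)) [:-tau j, 1:])"

lemma lag_eq_poly: "lag tau p i = poly (lagrange_poly i)"
proof
  fix x show "lag tau p i x = poly (lagrange_poly i) x"
    unfolding lagrange_poly_def lag_def poly_prod
    by (intro prod.cong) (auto simp: add_divide_distrib[symmetric] diff_divide_distrib[symmetric])
qed

lemma degree_lagrange_poly: "i \<le> p \<Longrightarrow> degree (lagrange_poly i) \<le> p"
proof -
  assume i: "i \<le> p"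
  define F where "F j = Polynomial.smult (1 / (tau i - tau j)) [:-tau j, 1:]" for j
  have "degree (lagrange_poly i) \<le> sum (degree \<circ> F) ({..p} - {i})"
    unfolding lagrange_poly_def F_def[symmetric] by (rule degree_prod_sum_le) simp
  also have "\<dots> \<le> (\<Sum>j\<in>{..p} - {i}. 1)"
    unfolding F_def by (intro sum_mono) (simp add: order_trans[OF degree_smult_le])
  finally show ?thesis using i by simp
qed

lemma lag_at_node:
  assumes "i \<le> p" "j \<le> p" shows "lag tau p i (tau j) = (if i = j then 1 else 0)"
proof (cases "i = j")
  case True
  have "lag tau p i (tau j) = (\<Prod>k\<in>{..p} - {i}. 1)"
    unfolding lag_def using True tau_inj assms by (intro prod.cong) auto
  then show ?thesis using True by simp
next
  case False
  then have "j \<in> {..p} - {i}" using assms by auto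
  then have "lag tau p i (tau j) = 0" unfolding lag_def by (subst prod_zero_iff) auto
  then show ?thesis using False by simp
qed

lemma lag_at_1: "i \<le> p \<Longrightarrow> lag tau p i 1 = (if i = p then 1 else 0)"
  using lag_at_node[of i p] tau_last by simp

lemma continuous_on_lag: "continuous_on S (lag tau p j)"
  unfolding lag_eq_poly by (rule continuous_on_poly_real)

lemma lag_bounded: "\<exists>A\<ge>0. \<forall>j\<le>p. \<forall>x\<in>{-1..1}. \<bar>lag tau p j x\<bar> \<le> A"
proof -
  have "continuous_on {-1..1} (\<lambda>x. \<Sum>j\<le>p. \<bar>lag tau p j x\<bar>)"
    by (intro continuous_intros continuous_on_lag)
  then obtain A where "A \<ge> 0" and A: "\<forall>x\<in>{-1..1}. \<bar>\<Sum>j\<le>p. \<bar>lag tau p j x\<bar>\<bar> \<le> A"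
    using continuous_on_compact_abs_bound compact_Icc by blast
  moreover have "\<bar>lag tau p j x\<bar> \<le> \<bar>\<Sum>j\<le>p. \<bar>lag tau p j x\<bar>\<bar>" if "j \<le> p" for j x
    using that by (auto intro: member_le_sum)
  ultimately show ?thesis by (meson order_trans)
qed

definition interp_poly :: "(nat \<Rightarrow> real) \<Rightarrow> real poly" where
  "interp_poly v = (\<Sum>j\<le>p. Polynomial.smult (v j) (lagrange_poly j))"

lemma poly_interp_poly: "poly (interp_poly v) x = (\<Sum>j\<le>p. v j * lag tau p j x)"
  by (simp add: interp_poly_def poly_sum lag_eq_poly)

lemma interp_poly_at_node: "j \<le> p \<Longrightarrow> poly (interp_poly v) (tau j) = v j"
  by (simp add: poly_interp_poly lag_at_node if_distrib cong: if_cong)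

lemma interp_poly_at_1: "poly (interp_poly v) 1 = v p"
  using interp_poly_at_node[of p] tau_last by simp

lemma degree_interp_poly: "degree (interp_poly v) \<le> p"
  unfolding interp_poly_def
  by (intro degree_sum_le) (auto intro: order_trans[OF degree_smult_le] degree_lagrange_poly)

lemma interp_poly_unique:
  assumes "degree q \<le> p" shows "interp_poly (\<lambda>i. poly q (tau i)) = q"
proof -
  define r where "r = q - interp_poly (\<lambda>i. poly q (tau i))"
  have "degree r \<le> p" unfolding r_def by (intro degree_diff_le assms degree_interp_poly)
  have "r = 0"
  proof (rule ccontr)
    assume r0: "r \<noteq> 0"
    have "tau ` {..p} \<subseteq> {x. poly r x = 0}" by (auto simp: r_def interp_poly_at_node)
    then have "card (tau ` {..p}) \<le> card {x. poly r x = 0}"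
      by (intro card_mono poly_roots_finite r0)
    also have "\<dots> \<le> p" using card_poly_roots_bound[OF r0] \<open>degree r \<le> p\<close> by simp
    also have "card (tau ` {..p}) = Suc p"
      by (subst card_image) (auto intro: inj_onI tau_inj)
    finally show False by simp
  qed
  then show ?thesis by (simp add: r_def)
qed

lemma sum_lag: "(\<Sum>i\<le>p. lag tau p i x) = 1"
  using arg_cong[OF interp_poly_unique[of 1], of "\<lambda>q. poly q x"] by (simp add: poly_interp_poly)

lemma pderiv_interp_poly: "pderiv (interp_poly v) = (\<Sum>j\<le>p. Polynomial.smult (v j) (pderiv (lagrange_poly j)))"
  using higher_pderiv_sum[of 1 "\<lambda>j. Polynomial.smult (v j) (lagrange_poly j)" "{..p}"]
  by (simp add: interp_poly_def pderiv_smult)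

lemma Lmat_eq_integral:
  "Lmat tau p i j = integral {-1..1} (\<lambda>x. poly (pderiv (lagrange_poly i)) x * poly (lagrange_poly j) x)
     - (if i = p \<and> j = p then 1 else 0)"
proof -
  have "deriv (lag tau p i) x = poly (pderiv (lagrange_poly i)) x" for x
    unfolding lag_eq_poly by (rule DERIV_imp_deriv[OF poly_DERIV])
  then show ?thesis unfolding Lmat_def by (simp add: lag_eq_poly)
qed

lemma Lmat_mult_vec:
  assumes i: "i \<le> p"
  shows "(\<Sum>j\<le>p. Lmat tau p i j * v j)
    = integral {-1..1} (\<lambda>x. poly (pderiv (lagrange_poly i)) x * poly (interp_poly v) x) - lag tau p i 1 * v p"
proof -
  let ?li' = "poly (pderiv (lagrange_poly i))"
  have "(\<Sum>j\<le>p. (if i = p \<and> j = p then 1 else 0) * v j) = lag tau p i 1 * v p"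
    using lag_at_1[OF i] by (simp add: if_distrib[of "\<lambda>c. c * _"] cong: if_cong)
  moreover have "(\<Sum>j\<le>p. integral {-1..1} (\<lambda>x. ?li' x * poly (lagrange_poly j) x) * v j)
      = integral {-1..1} (\<lambda>x. \<Sum>j\<le>p. ?li' x * poly (lagrange_poly j) x * v j)"
    by (subst integral_sum)
       (auto simp: integral_mult_left intro!: integrable_continuous_interval continuous_intros continuous_on_poly_real)
  moreover have "(\<lambda>x. \<Sum>j\<le>p. ?li' x * poly (lagrange_poly j) x * v j) = (\<lambda>x. ?li' x * poly (interp_poly v) x)"
    by (simp add: poly_interp_poly sum_distrib_left mult_ac lag_eq_poly)
  ultimately show ?thesis
    by (simp add: Lmat_eq_integral left_diff_distrib sum_subtractf)
qed

lemma Lmat_bilinear: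
  "(\<Sum>i\<le>p. c i * (\<Sum>j\<le>p. Lmat tau p i j * v j))
   = integral {-1..1} (\<lambda>x. poly (pderiv (interp_poly c)) x * poly (interp_poly v) x)
     - poly (interp_poly c) 1 * poly (interp_poly v) 1"
proof -
  let ?q = "poly (interp_poly v)"
  have "(\<Sum>i\<le>p. c i * (\<Sum>j\<le>p. Lmat tau p i j * v j))
     = (\<Sum>i\<le>p. c i * integral {-1..1} (\<lambda>x. poly (pderiv (lagrange_poly i)) x * ?q x))
       - (\<Sum>i\<le>p. c i * lag tau p i 1) * v p"
    by (simp add: Lmat_mult_vec right_diff_distrib sum_subtractf sum_distrib_right mult.assoc)
  also have "(\<Sum>i\<le>p. c i * integral {-1..1} (\<lambda>x. poly (pderiv (lagrange_poly i)) x * ?q x))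
     = integral {-1..1} (\<lambda>x. \<Sum>i\<le>p. c i * (poly (pderiv (lagrange_poly i)) x * ?q x))"
    by (subst integral_sum) (auto intro!: integrable_continuous_interval continuous_intros continuous_on_poly_real)
  also have "\<dots> = integral {-1..1} (\<lambda>x. poly (pderiv (interp_poly c)) x * ?q x)"
    by (simp add: pderiv_interp_poly poly_sum sum_distrib_left sum_distrib_right mult_ac)
  finally show ?thesis using interp_poly_at_1[of v] poly_interp_poly[of c 1] by simp
qed

lemma Lmat_kernel_trivial:
  assumes Lv: "\<forall>i\<le>p. (\<Sum>j\<le>p. Lmat tau p i j * v j) = 0" and j: "j \<le> p"
  shows "v j = 0"
proof -
  define q where "q = interp_poly v"
  have form_0: "(\<Sum>i\<le>p. c i * (\<Sum>j\<le>p. Lmat tau p i j * v j)) = 0" for c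
    using Lv by simp
  have "integral {-1..1} (\<lambda>x. poly (pderiv q) x * poly q x) - poly q 1 * poly q 1 = 0"
    using form_0[of v] unfolding Lmat_bilinear q_def .
  moreover have "integral {-1..1} (\<lambda>x. poly (pderiv q) x * poly q x)
     = poly q 1 * poly q 1 - poly q (-1) * poly q (-1) - integral {-1..1} (\<lambda>x. poly (pderiv q) x * poly q x)"
    using integral_pderiv_mult_poly[of q q] by (simp add: mult_ac)
  ultimately have "poly q 1 * poly q 1 + poly q (-1) * poly q (-1) = 0" by linarith
  then have q1: "poly q 1 = 0" and qm1: "poly q (-1) = 0"
    by (metis add_nonneg_eq_0_iff mult_eq_0_iff zero_le_square)+
  have "degree (pderiv q) \<le> degree q" by (simp add: degree_pderiv)
  also have "\<dots> \<le> p" unfolding q_def by (rule degree_interp_poly)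
  finally have q': "interp_poly (\<lambda>i. poly (pderiv q) (tau i)) = pderiv q" by (rule interp_poly_unique)
  have "integral {-1..1} (\<lambda>x. poly (pderiv (pderiv q)) x * poly q x) - poly (pderiv q) 1 * poly q 1 = 0"
    using form_0[of "\<lambda>i. poly (pderiv q) (tau i)"] unfolding Lmat_bilinear q_def[symmetric] q' .
  then have "integral {-1..1} (\<lambda>x. poly (pderiv q) x * poly (pderiv q) x) = 0"
    using integral_pderiv_mult_poly[of "pderiv q" q] q1 qm1 by simp
  then have "pderiv q = 0" by (intro poly_eq_0_if_integral_square_eq_0) auto
  then obtain h where "q = [:h:]" using pderiv_iszero by blast
  then have "poly q (tau j) = poly q 1" by simp
  then show ?thesis using interp_poly_at_node[OF j, of v] q1 unfolding q_def by simp
qed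

lemma Lmat_mult_one:
  assumes i: "i \<le> p" shows "(\<Sum>j\<le>p. Lmat tau p i j) = - lag tau p i (-1)"
proof -
  have "poly (interp_poly (\<lambda>_. 1)) = (\<lambda>_. 1)" by (simp add: fun_eq_iff poly_interp_poly sum_lag)
  then show ?thesis
    using Lmat_mult_vec[OF i, of "\<lambda>_. 1"] by (simp add: integral_pderiv_poly lag_eq_poly)
qed

lemma Lmat_mult_tau_plus_one:
  assumes i: "i \<le> p"
  shows "(\<Sum>j\<le>p. Lmat tau p i j * (tau j + 1)) = - integral {-1..1} (lag tau p i)"
proof (cases "p = 0")
  case True
  have l0: "lagrange_poly 0 = 1" unfolding lagrange_poly_def using True by simp
  have "lag tau p 0 = (\<lambda>_. 1)" unfolding lag_eq_poly l0 by (simp add: fun_eq_iff)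
  moreover have "Lmat tau p 0 0 = -1" unfolding Lmat_eq_integral l0 using True by simp
  ultimately show ?thesis using True i tau_last by simp
next
  case False
  then have "interp_poly (\<lambda>j. poly [:1, 1:] (tau j)) = [:1, 1:]" by (intro interp_poly_unique) simp
  then have "(\<Sum>j\<le>p. Lmat tau p i j * (tau j + 1))
      = integral {-1..1} (\<lambda>x. poly (pderiv (lagrange_poly i)) x * poly [:1, 1:] x) - lag tau p i 1 * 2"
    using Lmat_mult_vec[OF i, of "\<lambda>j. tau j + 1"] tau_last by (simp add: add.commute)
  also have "\<dots> = - integral {-1..1} (lag tau p i)"
    using integral_pderiv_mult_poly[of "lagrange_poly i" "[:1, 1:]"] by (simp add: pderiv_pCons lag_eq_poly)
  finally show ?thesis .
qed

lemma Lmat_solvable: "\<exists>V. (\<forall>i\<le>p. (\<Sum>j\<le>p. Lmat tau p i j * V j) = r i) \<and> (\<forall>i>p. V i = 0)"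
proof -
  define n where "n = Suc p"
  define A :: "real mat" where "A = Matrix.mat n n (\<lambda>(i, j). Lmat tau p i j)"
  have A: "A \<in> carrier_mat n n" unfolding A_def by simp
  have A_mult: "(A *\<^sub>v v) $ i = (\<Sum>j\<le>p. Lmat tau p i j * v $ j)" if "i \<le> p" "v \<in> carrier_vec n" for v i
    using that by (simp add: A_def n_def scalar_prod_def lessThan_Suc_atMost[symmetric] atLeast0LessThan)
  have "Determinant.det A \<noteq> 0"
  proof
    assume "Determinant.det A = 0"
    then obtain v where v: "v \<in> carrier_vec n" "v \<noteq> 0\<^sub>v n" "A *\<^sub>v v = 0\<^sub>v n"
      using det_0_iff_vec_prod_zero_field[OF A] by blast
    have "(\<Sum>j\<le>p. Lmat tau p i j * v $ j) = 0" if "i \<le> p" for i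
    proof -
      have "(\<Sum>j\<le>p. Lmat tau p i j * v $ j) = (A *\<^sub>v v) $ i" using A_mult[OF that v(1)] ..
      also have "\<dots> = 0" using v(3) that by (simp add: n_def)
      finally show ?thesis .
    qed
    then have "v $ j = 0" if "j < n" for j using Lmat_kernel_trivial[of "\<lambda>j. v $ j"] that by (simp add: n_def)
    then have "v = 0\<^sub>v n" using v(1) by (intro eq_vecI) auto
    then show False using v(2) by simp
  qed
  then have "A \<in> Units (ring_mat TYPE(real) n ())" by (rule det_non_zero_imp_unit[OF A])
  then obtain B where B: "B \<in> carrier_mat n n" "A * B = 1\<^sub>m n"
    by (auto simp: Units_def ring_mat_def)
  define V where "V = B *\<^sub>v vec n r"
  have V: "V \<in> carrier_vec n" using B(1) by (simp add: V_def)
  have AV: "A *\<^sub>v V = vec n r"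
    unfolding V_def using A B by (simp add: assoc_mult_mat_vec[symmetric])
  have "(\<Sum>j\<le>p. Lmat tau p i j * V $ j) = r i" if "i \<le> p" for i
    using A_mult[OF that V] AV that by (simp add: n_def)
  then show ?thesis
    by (intro exI[of _ "\<lambda>j. if j \<le> p then V $ j else 0"]) auto
qed

lemma Lmat_solution_unique:
  assumes "\<forall>i\<le>p. (\<Sum>j\<le>p. Lmat tau p i j * V j) = r i" "\<forall>i\<le>p. (\<Sum>j\<le>p. Lmat tau p i j * W j) = r i"
    and "m \<le> p"
  shows "V m = W m"
proof -
  have "\<forall>i\<le>p. (\<Sum>j\<le>p. Lmat tau p i j * (V j - W j)) = 0"
    using assms(1,2) by (simp add: right_diff_distrib sum_subtractf)
  from Lmat_kernel_trivial[OF this assms(3)] show ?thesis by simp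
qed

lemma Lmat_Linv_apply: "\<forall>i\<le>p. (\<Sum>j\<le>p. Lmat tau p i j * Linv_apply tau p r j) = r i"
proof -
  have "\<exists>!V. (\<forall>i\<le>p. (\<Sum>j\<le>p. Lmat tau p i j * V j) = r i) \<and> (\<forall>i>p. V i = 0)"
  proof (rule ex_ex1I[OF Lmat_solvable])
    fix V W
    assume "(\<forall>i\<le>p. (\<Sum>j\<le>p. Lmat tau p i j * V j) = r i) \<and> (\<forall>i>p. V i = 0)"
      and "(\<forall>i\<le>p. (\<Sum>j\<le>p. Lmat tau p i j * W j) = r i) \<and> (\<forall>i>p. W i = 0)"
    then show "V = W"
      using Lmat_solution_unique[of V r W] by (intro ext, case_tac "x \<le> p") auto
  qed
  from theI'[OF this] show ?thesis unfolding Linv_apply_def by (rule conjunct1)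
qed

lemma Linv_apply_eqI:
  assumes "\<forall>i\<le>p. (\<Sum>j\<le>p. Lmat tau p i j * V j) = r i" "m \<le> p"
  shows "Linv_apply tau p r m = V m"
  using Lmat_solution_unique[OF Lmat_Linv_apply assms] .

lemma Linv_apply_linear:
  assumes m: "m \<le> p"
  shows "Linv_apply tau p (\<lambda>i. a * r i + b * s i) m = a * Linv_apply tau p r m + b * Linv_apply tau p s m"
proof (rule Linv_apply_eqI[OF _ m], intro allI impI)
  fix i assume i: "i \<le> p"
  have "(\<Sum>j\<le>p. Lmat tau p i j * (a * Linv_apply tau p r j + b * Linv_apply tau p s j))
     = a * (\<Sum>j\<le>p. Lmat tau p i j * Linv_apply tau p r j) + b * (\<Sum>j\<le>p. Lmat tau p i j * Linv_apply tau p s j)"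
    by (simp add: distrib_left sum.distrib sum_distrib_left mult_ac)
  also have "\<dots> = a * r i + b * s i" using Lmat_Linv_apply i by simp
  finally show "(\<Sum>j\<le>p. Lmat tau p i j * (a * Linv_apply tau p r j + b * Linv_apply tau p s j)) = a * r i + b * s i" .
qed

lemma Linv_apply_diff:
  "m \<le> p \<Longrightarrow> Linv_apply tau p (\<lambda>i. r i - s i) m = Linv_apply tau p r m - Linv_apply tau p s m"
  using Linv_apply_linear[of m 1 r "-1" s] by simp

lemma Linv_apply_scale: "m \<le> p \<Longrightarrow> Linv_apply tau p (\<lambda>i. a * r i) m = a * Linv_apply tau p r m"
  using Linv_apply_linear[of m a r 0 r] by simp

lemma Linv_apply_unit_expansion:
  assumes m: "m \<le> p"
  shows "Linv_apply tau p r m = (\<Sum>i\<le>p. r i * Linv_apply tau p (\<lambda>k. if k = i then 1 else 0) m)"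
proof (rule Linv_apply_eqI[OF _ m], intro allI impI)
  fix k assume k: "k \<le> p"
  let ?e = "\<lambda>i k. if k = i then 1 else (0::real)"
  have "(\<Sum>j\<le>p. Lmat tau p k j * (\<Sum>i\<le>p. r i * Linv_apply tau p (?e i) j))
     = (\<Sum>i\<le>p. r i * (\<Sum>j\<le>p. Lmat tau p k j * Linv_apply tau p (?e i) j))"
    unfolding sum_distrib_left by (subst sum.swap) (simp add: mult.left_commute)
  also have "\<dots> = (\<Sum>i\<le>p. r i * ?e i k)" using Lmat_Linv_apply k by simp
  also have "\<dots> = r k" using k by (simp add: if_distrib cong: if_cong)
  finally show "(\<Sum>j\<le>p. Lmat tau p k j * (\<Sum>i\<le>p. r i * Linv_apply tau p (?e i) j)) = r k" .
qed

lemma Linv_apply_bounded: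
  "\<exists>\<kappa>\<ge>0. \<forall>r R m. (\<forall>i\<le>p. \<bar>r i\<bar> \<le> R) \<longrightarrow> m \<le> p \<longrightarrow> \<bar>Linv_apply tau p r m\<bar> \<le> \<kappa> * R"
proof -
  let ?c = "\<lambda>i m. Linv_apply tau p (\<lambda>k. if k = i then 1 else 0) m"
  define \<kappa> where "\<kappa> = (\<Sum>i\<le>p. \<Sum>m\<le>p. \<bar>?c i m\<bar>)"
  have "\<bar>Linv_apply tau p r m\<bar> \<le> \<kappa> * R" if R: "\<forall>i\<le>p. \<bar>r i\<bar> \<le> R" and m: "m \<le> p" for r R m
  proof -
    have "\<bar>Linv_apply tau p r m\<bar> \<le> (\<Sum>i\<le>p. \<bar>r i\<bar> * \<bar>?c i m\<bar>)"
      unfolding Linv_apply_unit_expansion[OF m, of r] abs_mult[symmetric] by (rule sum_abs)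
    also have "\<dots> \<le> (\<Sum>i\<le>p. R * (\<Sum>k\<le>p. \<bar>?c i k\<bar>))"
    proof (rule sum_mono)
      fix i assume "i \<in> {..p}"
      then have "\<bar>r i\<bar> \<le> R" using R by simp
      moreover have "\<bar>?c i m\<bar> \<le> (\<Sum>k\<le>p. \<bar>?c i k\<bar>)" using m by (intro member_le_sum) auto
      ultimately show "\<bar>r i\<bar> * \<bar>?c i m\<bar> \<le> R * (\<Sum>k\<le>p. \<bar>?c i k\<bar>)"
        by (intro mult_mono) auto
    qed
    also have "\<dots> = \<kappa> * R" unfolding \<kappa>_def sum_distrib_left[symmetric] by (rule mult.commute)
    finally show ?thesis .
  qed
  moreover have "\<kappa> \<ge> 0" unfolding \<kappa>_def by (intro sum_nonneg) auto
  ultimately show ?thesis by blast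
qed

lemma Linv_apply_Bvec:
  assumes m: "m \<le> p" shows "Linv_apply tau p (Bvec tau p un) m = - un"
proof -
  have "(\<Sum>j\<le>p. Lmat tau p i j * - un) = Bvec tau p un i" if "i \<le> p" for i
  proof -
    have "(\<Sum>j\<le>p. Lmat tau p i j * - un) = (\<Sum>j\<le>p. Lmat tau p i j) * - un"
      by (rule sum_distrib_right[symmetric])
    then show ?thesis using Lmat_mult_one[OF that] by (simp add: Bvec_def)
  qed
  then show ?thesis using Linv_apply_eqI[of "\<lambda>_. - un" "Bvec tau p un" m] m by simp
qed

lemma Linv_apply_integral_lag:
  assumes m: "m \<le> p" shows "Linv_apply tau p (\<lambda>j. integral {-1..1} (lag tau p j)) m = - (tau m + 1)"
proof -
  have "(\<Sum>j\<le>p. Lmat tau p i j * - (tau j + 1)) = integral {-1..1} (lag tau p i)" if "i \<le> p" for i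
    using Lmat_mult_tau_plus_one[OF that] by (simp only: mult_minus_right sum_negf minus_minus)
  then show ?thesis using Linv_apply_eqI[of "\<lambda>j. - (tau j + 1)" _ m] m by simp
qed

end

locale dg_iteration = radau_nodes +
  fixes f :: "real \<Rightarrow> real \<Rightarrow> real" and Lc A \<kappa> F0 M :: real
  assumes Lc_nonneg: "0 \<le> Lc" and f_lipschitz: "\<forall>t x y. \<bar>f t x - f t y\<bar> \<le> Lc * \<bar>x - y\<bar>"
    and f_continuous: "continuous_on UNIV (\<lambda>(t, x). f t x)"
    and A_nonneg: "0 \<le> A" and lag_le_A: "\<forall>j\<le>p. \<forall>x\<in>{-1..1}. \<bar>lag tau p j x\<bar> \<le> A"
    and \<kappa>_nonneg: "0 \<le> \<kappa>"
    and Linv_le_\<kappa>: "\<forall>r R m. (\<forall>i\<le>p. \<bar>r i\<bar> \<le> R) \<longrightarrow> m \<le> p \<longrightarrow> \<bar>Linv_apply tau p r m\<bar> \<le> \<kappa> * R"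
    and F0_nonneg: "0 \<le> F0" and M_nonneg: "0 \<le> M"
begin

abbreviation "P \<equiv> real (Suc p)"

definition "C_euler m = (1 + Lc) ^ m * real m * (Lc * F0 + M)"
definition "Q = P * \<kappa> * A * Lc * P * A"
text \<open>\<open>h_max\<close> guarantees \<open>\<Delta>t Q \<le> 1/2\<close>, which lets the a priori bound on \<open>\<bar>U\<^sub>h - u\<^sub>n\<bar>\<close>
  absorb its own right-hand side (see \<open>dg_solution_near_un\<close>).\<close>
definition "h_max = 1 / (1 + 2 * Q)"
definition "C_near = 2 * P * \<kappa> * A * (F0 + M)"
definition "C_first = \<kappa> * (M + Lc * P * A * C_near) * A"
definition "contraction = \<kappa> * Lc * P * A * A"
definition "C_iter K = contraction ^ K * (C_first + C_euler p)"

lemma Q_nonneg: "0 \<le> Q"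
  unfolding Q_def using \<kappa>_nonneg A_nonneg Lc_nonneg by simp

lemma h_max_pos: "0 < h_max"
  unfolding h_max_def using Q_nonneg by simp

lemma C_near_nonneg: "0 \<le> C_near"
  unfolding C_near_def using \<kappa>_nonneg A_nonneg F0_nonneg M_nonneg by simp

lemma C_euler_nonneg: "0 \<le> C_euler m"
  unfolding C_euler_def using Lc_nonneg F0_nonneg M_nonneg by simp

lemma C_euler_mono: "m \<le> n \<Longrightarrow> C_euler m \<le> C_euler n"
  unfolding C_euler_def using Lc_nonneg F0_nonneg M_nonneg
  by (intro mult_right_mono mult_mono power_increasing) auto

lemma C_euler_Suc: "C_euler m * (1 + Lc) + (Lc * F0 + M) \<le> C_euler (Suc m)"
proof -
  have "1 * (Lc * F0 + M) \<le> (1 + Lc) ^ Suc m * (Lc * F0 + M)"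
    using Lc_nonneg F0_nonneg M_nonneg by (intro mult_right_mono one_le_power) auto
  then show ?thesis unfolding C_euler_def by (simp add: algebra_simps)
qed

lemma continuous_on_Fvec_integrand:
  "continuous_on S (\<lambda>x. f (tn + (x + 1) * dt / 2) (\<Sum>m\<le>p. U m * lag tau p m x) * lag tau p j x)"
  by (intro continuous_intros continuous_on_curried_comp[OF f_continuous] continuous_on_lag) auto

lemma abs_interpolant_le:
  assumes w: "\<forall>m\<le>p. \<bar>w m\<bar> \<le> e" and x: "x \<in> {-1..1}"
  shows "\<bar>\<Sum>m\<le>p. w m * lag tau p m x\<bar> \<le> P * A * e"
proof -
  have "\<bar>\<Sum>m\<le>p. w m * lag tau p m x\<bar> \<le> (\<Sum>m\<le>p. \<bar>w m\<bar> * \<bar>lag tau p m x\<bar>)"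
    unfolding abs_mult[symmetric] by (rule sum_abs)
  also have "\<dots> \<le> (\<Sum>m\<le>p. e * A)"
    using w lag_le_A x by (intro sum_mono mult_mono) auto
  finally show ?thesis by (simp add: mult_ac)
qed

lemma abs_integral_lag_le: "j \<le> p \<Longrightarrow> \<bar>integral {-1..1} (lag tau p j)\<bar> \<le> 2 * A"
  using abs_integral_le_on_Icc[of "-1" 1 "lag tau p j" A] lag_le_A continuous_on_lag by simp

lemma Fvec_lipschitz:
  assumes e: "\<forall>m\<le>p. \<bar>U m - V m\<bar> \<le> e" and j: "j \<le> p"
  shows "\<bar>Fvec f tau p tn dt U j - Fvec f tau p tn dt V j\<bar> \<le> 2 * (Lc * (P * A * e) * A)"
proof -
  let ?s = "\<lambda>x. tn + (x + 1) * dt / 2" and ?u = "\<lambda>U x. \<Sum>m\<le>p. U m * lag tau p m x"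
  have "\<bar>f (?s x) (?u U x) * lag tau p j x - f (?s x) (?u V x) * lag tau p j x\<bar> \<le> Lc * (P * A * e) * A"
    if x: "x \<in> {-1..1}" for x
  proof -
    have "\<bar>?u U x - ?u V x\<bar> = \<bar>\<Sum>m\<le>p. (U m - V m) * lag tau p m x\<bar>"
      by (simp add: sum_subtractf left_diff_distrib)
    also have "\<dots> \<le> P * A * e" using abs_interpolant_le[OF _ x, of "\<lambda>m. U m - V m"] e by simp
    finally have "\<bar>f (?s x) (?u U x) - f (?s x) (?u V x)\<bar> \<le> Lc * (P * A * e)"
      using f_lipschitz Lc_nonneg by (meson mult_left_mono order_trans)
    then show ?thesis
      unfolding left_diff_distrib[symmetric] abs_mult using lag_le_A j x by (intro mult_mono) auto
  qed
  then have "\<bar>integral {-1..1} (\<lambda>x. f (?s x) (?u U x) * lag tau p j x - f (?s x) (?u V x) * lag tau p j x)\<bar>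
      \<le> 2 * (Lc * (P * A * e) * A)"
    using abs_integral_le_on_Icc[of "-1" 1] by (simp add: continuous_on_diff continuous_on_Fvec_integrand)
  then show ?thesis unfolding Fvec_def
    by (subst integral_diff[symmetric]) (auto intro!: integrable_continuous_interval continuous_on_Fvec_integrand)
qed

lemma Fvec_near_constant:
  assumes d: "\<forall>m\<le>p. \<bar>U m - un\<bar> \<le> d" and j: "j \<le> p" and dt: "0 \<le> dt"
    and time_lip: "\<forall>s\<in>{tn..tn+dt}. \<bar>f s un - f tn un\<bar> \<le> M * (s - tn)"
  shows "\<bar>Fvec f tau p tn dt U j - f tn un * integral {-1..1} (lag tau p j)\<bar>
    \<le> 2 * ((M * dt + Lc * (P * A * d)) * A)"
proof -
  let ?s = "\<lambda>x. tn + (x + 1) * dt / 2" and ?u = "\<lambda>x. \<Sum>m\<le>p. U m * lag tau p m x"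
  have "\<bar>f (?s x) (?u x) * lag tau p j x - f tn un * lag tau p j x\<bar> \<le> (M * dt + Lc * (P * A * d)) * A"
    if x: "x \<in> {-1..1}" for x
  proof -
    have "?u x - un = (\<Sum>m\<le>p. (U m - un) * lag tau p m x)"
      using sum_lag[of x] by (simp add: sum_subtractf left_diff_distrib sum_distrib_left[symmetric])
    also have "\<bar>\<dots>\<bar> \<le> P * A * d" using abs_interpolant_le[OF _ x, of "\<lambda>m. U m - un"] d by simp
    finally have "\<bar>f (?s x) (?u x) - f (?s x) un\<bar> \<le> Lc * (P * A * d)"
      using f_lipschitz Lc_nonneg by (meson mult_left_mono order_trans)
    moreover have "?s x \<in> {tn..tn+dt}" "?s x - tn \<le> dt"
      using x dt mult_right_mono[of "x + 1" 2 dt] by auto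
    then have "\<bar>f (?s x) un - f tn un\<bar> \<le> M * dt"
      using time_lip M_nonneg by (meson mult_left_mono order_trans)
    ultimately have "\<bar>f (?s x) (?u x) - f tn un\<bar> \<le> M * dt + Lc * (P * A * d)" by linarith
    then show ?thesis
      unfolding left_diff_distrib[symmetric] abs_mult using lag_le_A j x by (intro mult_mono) auto
  qed
  then have "\<bar>integral {-1..1} (\<lambda>x. f (?s x) (?u x) * lag tau p j x - f tn un * lag tau p j x)\<bar>
      \<le> 2 * ((M * dt + Lc * (P * A * d)) * A)"
    using abs_integral_le_on_Icc[of "-1" 1]
    by (simp add: continuous_on_diff continuous_on_Fvec_integrand continuous_on_mult continuous_on_lag)
  then show ?thesis unfolding Fvec_def
    by (subst (asm) integral_diff)
       (auto simp: integral_mult_right intro!: integrable_continuous_interval continuous_intros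
         continuous_on_Fvec_integrand continuous_on_lag)
qed

lemma node_offset_bounds:
  assumes "m \<le> p" "0 \<le> dt" shows "0 \<le> node tau tn dt m - tn" "node tau tn dt m - tn \<le> dt"
  using tau_bounds[OF assms(1)] assms(2) mult_right_mono[of "tau m + 1" 2 dt]
  by (auto simp: node_def)

lemma node_step_bounds:
  assumes "m < p" "0 \<le> dt"
  shows "0 \<le> node tau tn dt (Suc m) - node tau tn dt m" "node tau tn dt (Suc m) - node tau tn dt m \<le> dt"
proof -
  have step: "node tau tn dt (Suc m) - node tau tn dt m = (tau (Suc m) - tau m) * dt / 2"
    by (simp add: node_def field_simps)
  have "tau m < tau (Suc m)" "-1 < tau m" "tau (Suc m) \<le> 1"
    using tau_Suc_less assms tau_bounds[of m] tau_bounds[of "Suc m"] by auto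
  then show "0 \<le> node tau tn dt (Suc m) - node tau tn dt m" "node tau tn dt (Suc m) - node tau tn dt m \<le> dt"
    unfolding step using assms(2) mult_right_mono[of "tau (Suc m) - tau m" 2 dt] by auto
qed

lemma dg_solution_fixed_point:
  assumes dg: "dg_solution f tau p tn dt un Uh" and m: "m \<le> p"
  shows "Uh m = un - dt / 2 * Linv_apply tau p (Fvec f tau p tn dt Uh) m"
proof -
  let ?F = "Fvec f tau p tn dt Uh" and ?B = "Bvec tau p un"
  have "\<forall>i\<le>p. (\<Sum>j\<le>p. Lmat tau p i j * Uh j) = (- (dt / 2)) * ?F i + (- 1) * ?B i"
    using dg unfolding dg_solution_def by (auto simp: algebra_simps)
  then have "Uh m = Linv_apply tau p (\<lambda>i. (- (dt / 2)) * ?F i + (- 1) * ?B i) m"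
    using Linv_apply_eqI m by simp
  also have "\<dots> = (- (dt / 2)) * Linv_apply tau p ?F m + (- 1) * Linv_apply tau p ?B m"
    by (rule Linv_apply_linear[OF m])
  also have "\<dots> = un - dt / 2 * Linv_apply tau p ?F m"
    using Linv_apply_Bvec[OF m] by simp
  finally show ?thesis .
qed

lemma fp_iter_Suc_fixed_point:
  "m \<le> p \<Longrightarrow> fp_iter f tau p tn dt un (Suc k) m
    = un - dt / 2 * Linv_apply tau p (Fvec f tau p tn dt (fp_iter f tau p tn dt un k)) m"
  using Linv_apply_Bvec by simp

context
  fixes tn dt un h :: real
  assumes dt_pos: "0 < dt" and dt_le_h: "dt \<le> h" and h_le_h_max: "h \<le> h_max"
    and f_bound: "\<bar>f tn un\<bar> \<le> F0"
    and time_lip: "\<forall>s\<in>{tn..tn+dt}. \<bar>f s un - f tn un\<bar> \<le> M * (s - tn)"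
begin

lemma h_le_1: "h \<le> 1"
  using h_le_h_max Q_nonneg by (simp add: h_max_def order.trans[OF _ divide_le_eq_1_pos[THEN iffD2]])

lemma dt_Q_le_half: "dt * Q \<le> 1 / 2"
proof -
  have "dt * Q \<le> h_max * Q" using dt_le_h h_le_h_max Q_nonneg by (intro mult_right_mono) auto
  also have "\<dots> \<le> 1 / 2" unfolding h_max_def using Q_nonneg by (simp add: field_simps)
  finally show ?thesis .
qed

lemma euler0_first_order:
  "m \<le> p \<Longrightarrow> \<bar>euler0 f tau tn dt un m - un - (node tau tn dt m - tn) * f tn un\<bar> \<le> C_euler m * h\<^sup>2"
proof (induction m)
  case 0
  then show ?case by (simp add: C_euler_def)
next
  case (Suc m)
  let ?e = "euler0 f tau tn dt un m" and ?n = "node tau tn dt m" and ?n1 = "node tau tn dt (Suc m)"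
  let ?f0 = "f tn un"
  define E where "E = ?e - un - (?n - tn) * ?f0"
  have m: "m < p" using Suc.prems by simp
  have IH: "\<bar>E\<bar> \<le> C_euler m * h\<^sup>2" using Suc.IH m unfolding E_def by simp
  have n: "0 \<le> ?n - tn" "?n - tn \<le> dt" using node_offset_bounds[of m dt tn] m dt_pos by auto
  have n1: "0 \<le> ?n1 - ?n" "?n1 - ?n \<le> dt" using node_step_bounds[OF m, of dt tn] dt_pos by auto
  have "\<bar>(?n - tn) * ?f0\<bar> \<le> h * F0"
    unfolding abs_mult using n f_bound dt_le_h by (intro mult_mono) auto
  then have "\<bar>?e - un\<bar> \<le> C_euler m * h\<^sup>2 + h * F0" using IH unfolding E_def by linarith
  have "\<bar>f ?n ?e - f ?n un\<bar> \<le> Lc * \<bar>?e - un\<bar>" using f_lipschitz by blast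
  also have "\<dots> \<le> Lc * (C_euler m * h\<^sup>2 + h * F0)" using \<open>\<bar>?e - un\<bar> \<le> _\<close> Lc_nonneg by (rule mult_left_mono)
  finally have lip_step: "\<bar>f ?n ?e - f ?n un\<bar> \<le> Lc * (C_euler m * h\<^sup>2 + h * F0)" .
  have "?n \<in> {tn..tn+dt}" using n by auto
  then have "\<bar>f ?n un - ?f0\<bar> \<le> M * (?n - tn)" using time_lip by blast
  also have "\<dots> \<le> M * h" using n dt_le_h M_nonneg by (intro mult_left_mono) auto
  finally have time_step: "\<bar>f ?n un - ?f0\<bar> \<le> M * h" .
  from lip_step time_step have "\<bar>f ?n ?e - ?f0\<bar> \<le> Lc * (C_euler m * h\<^sup>2 + h * F0) + M * h" by linarith
  then have "\<bar>(?n1 - ?n) * (f ?n ?e - ?f0)\<bar> \<le> h * (Lc * (C_euler m * h\<^sup>2 + h * F0) + M * h)"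
    unfolding abs_mult using n1 dt_le_h by (intro mult_mono) auto
  also have "\<dots> = Lc * C_euler m * h\<^sup>2 * h + h\<^sup>2 * (Lc * F0 + M)"
    by (simp add: algebra_simps power2_eq_square)
  also have "\<dots> \<le> Lc * C_euler m * h\<^sup>2 * 1 + h\<^sup>2 * (Lc * F0 + M)"
    using h_le_1 Lc_nonneg C_euler_nonneg[of m] by (intro add_mono mult_left_mono) auto
  finally have step: "\<bar>(?n1 - ?n) * (f ?n ?e - ?f0)\<bar> \<le> Lc * C_euler m * h\<^sup>2 + h\<^sup>2 * (Lc * F0 + M)"
    by simp
  have "euler0 f tau tn dt un (Suc m) - un - (?n1 - tn) * ?f0 = E + (?n1 - ?n) * (f ?n ?e - ?f0)"
    unfolding E_def by (simp add: algebra_simps)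
  then have "\<bar>euler0 f tau tn dt un (Suc m) - un - (?n1 - tn) * ?f0\<bar> \<le> (C_euler m * (1 + Lc) + (Lc * F0 + M)) * h\<^sup>2"
    using IH step by (simp add: algebra_simps)
  also have "\<dots> \<le> C_euler (Suc m) * h\<^sup>2" using C_euler_Suc by (intro mult_right_mono) auto
  finally show ?case .
qed

lemma dg_solution_near_un:
  assumes dg: "dg_solution f tau p tn dt un Uh" and m: "m \<le> p"
  shows "\<bar>Uh m - un\<bar> \<le> C_near * h"
proof -
  let ?F = "Fvec f tau p tn dt Uh"
  define d where "d = (\<Sum>m\<le>p. \<bar>Uh m - un\<bar>)"
  have d: "\<forall>m\<le>p. \<bar>Uh m - un\<bar> \<le> d" unfolding d_def by (auto intro: member_le_sum)
  define R where "R = 2 * A * F0 + 2 * ((M * dt + Lc * (P * A * d)) * A)"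
  have "\<bar>?F i\<bar> \<le> R" if i: "i \<le> p" for i
  proof -
    have "\<bar>?F i - f tn un * integral {-1..1} (lag tau p i)\<bar> \<le> 2 * ((M * dt + Lc * (P * A * d)) * A)"
      using Fvec_near_constant[OF d i _ time_lip] dt_pos by simp
    moreover have "\<bar>f tn un * integral {-1..1} (lag tau p i)\<bar> \<le> F0 * (2 * A)"
      unfolding abs_mult using f_bound abs_integral_lag_le[OF i] F0_nonneg by (intro mult_mono) auto
    moreover have "\<bar>?F i\<bar> \<le> \<bar>?F i - f tn un * integral {-1..1} (lag tau p i)\<bar> + \<bar>f tn un * integral {-1..1} (lag tau p i)\<bar>"
      by (metis abs_triangle_ineq diff_add_cancel)
    ultimately show ?thesis unfolding R_def by (simp add: mult_ac)
  qed
  then have "\<bar>Uh k - un\<bar> \<le> dt / 2 * (\<kappa> * R)" if "k \<le> p" for k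
    using dg_solution_fixed_point[OF dg that] Linv_le_\<kappa> that dt_pos by (simp add: abs_mult)
  then have "d \<le> real (card {..p}) * (dt / 2 * (\<kappa> * R))"
    unfolding d_def by (intro sum_bounded_above) auto
  also have "\<dots> = dt * (P * \<kappa> * A) * (F0 + M * dt) + (dt * Q) * d"
    by (simp add: R_def Q_def algebra_simps)
  also have "\<dots> \<le> h * (P * \<kappa> * A) * (F0 + M) + d / 2"
  proof (rule add_mono)
    have "M * dt \<le> M" using dt_le_h h_le_1 M_nonneg by (simp add: mult_left_le)
    then show "dt * (P * \<kappa> * A) * (F0 + M * dt) \<le> h * (P * \<kappa> * A) * (F0 + M)"
      using dt_pos dt_le_h \<kappa>_nonneg A_nonneg F0_nonneg M_nonneg by (intro mult_mono) auto
    show "dt * Q * d \<le> d / 2"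
      using mult_right_mono[OF dt_Q_le_half, of d] d[rule_format, of 0] by simp
  qed
  finally have "d \<le> C_near * h" unfolding C_near_def by (simp add: algebra_simps)
  then show ?thesis using d m by (meson order_trans)
qed

lemma dg_solution_first_order:
  assumes dg: "dg_solution f tau p tn dt un Uh" and m: "m \<le> p"
  shows "\<bar>Uh m - un - (node tau tn dt m - tn) * f tn un\<bar> \<le> C_first * h\<^sup>2"
proof -
  let ?F = "Fvec f tau p tn dt Uh" and ?f0 = "f tn un" and ?I = "\<lambda>i. integral {-1..1} (lag tau p i)"
  have lin: "Linv_apply tau p (\<lambda>i. ?f0 * ?I i) m = ?f0 * - (tau m + 1)"
    using Linv_apply_scale[OF m, of ?f0 ?I] Linv_apply_integral_lag[OF m] by simp
  have "Uh m - un - (node tau tn dt m - tn) * ?f0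
      = - (dt / 2) * (Linv_apply tau p ?F m - Linv_apply tau p (\<lambda>i. ?f0 * ?I i) m)"
    unfolding lin by (subst dg_solution_fixed_point[OF dg m]) (simp add: node_def algebra_simps)
  also have "\<dots> = - (dt / 2) * Linv_apply tau p (\<lambda>i. ?F i - ?f0 * ?I i) m"
    by (simp add: Linv_apply_diff[OF m])
  finally have eq: "\<bar>Uh m - un - (node tau tn dt m - tn) * ?f0\<bar>
      = dt / 2 * \<bar>Linv_apply tau p (\<lambda>i. ?F i - ?f0 * ?I i) m\<bar>"
    using dt_pos by (simp add: abs_mult)
  define R where "R = 2 * ((M * h + Lc * (P * A * (C_near * h))) * A)"
  have "\<bar>?F i - ?f0 * ?I i\<bar> \<le> R" if i: "i \<le> p" for i
  proof -
    have "\<forall>k\<le>p. \<bar>Uh k - un\<bar> \<le> C_near * h" using dg_solution_near_un[OF dg] by blast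
    then have "\<bar>?F i - ?f0 * ?I i\<bar> \<le> 2 * ((M * dt + Lc * (P * A * (C_near * h))) * A)"
      using Fvec_near_constant[OF _ i _ time_lip] dt_pos by simp
    also have "\<dots> \<le> R" unfolding R_def
      using dt_le_h M_nonneg Lc_nonneg A_nonneg C_near_nonneg
      by (intro mult_left_mono mult_right_mono add_mono) auto
    finally show ?thesis .
  qed
  then have "\<bar>Uh m - un - (node tau tn dt m - tn) * ?f0\<bar> \<le> dt / 2 * (\<kappa> * R)"
    unfolding eq using Linv_le_\<kappa> m dt_pos by (intro mult_left_mono) auto
  also have "\<dots> \<le> h / 2 * (\<kappa> * R)"
    using dt_le_h dt_pos \<kappa>_nonneg M_nonneg Lc_nonneg A_nonneg C_near_nonneg
    by (intro mult_right_mono) (auto simp: R_def)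
  also have "\<dots> = C_first * h\<^sup>2" by (simp add: R_def C_first_def power2_eq_square algebra_simps)
  finally show ?thesis .
qed

lemma fp_iter_error:
  assumes dg: "dg_solution f tau p tn dt un Uh"
  shows "\<forall>m\<le>p. \<bar>Uh m - fp_iter f tau p tn dt un K m\<bar> \<le> C_iter K * h ^ (K + 2)"
proof (induction K)
  case 0
  have "\<bar>Uh m - euler0 f tau tn dt un m\<bar> \<le> C_first * h\<^sup>2 + C_euler p * h\<^sup>2" if m: "m \<le> p" for m
    using dg_solution_first_order[OF dg m] euler0_first_order[OF m]
      mult_right_mono[OF C_euler_mono[OF m], of "h\<^sup>2"] by simp
  then show ?case by (simp add: C_iter_def algebra_simps power2_eq_square)
next
  case (Suc K)
  let ?U = "fp_iter f tau p tn dt un K" and ?e = "C_iter K * h ^ (K + 2)"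
  let ?dF = "\<lambda>i. Fvec f tau p tn dt Uh i - Fvec f tau p tn dt ?U i"
  have "\<bar>Uh m - fp_iter f tau p tn dt un (Suc K) m\<bar> \<le> C_iter (Suc K) * h ^ (Suc K + 2)"
    if m: "m \<le> p" for m
  proof -
    have "Uh m - fp_iter f tau p tn dt un (Suc K) m = - (dt / 2) * Linv_apply tau p ?dF m"
      unfolding dg_solution_fixed_point[OF dg m] fp_iter_Suc_fixed_point[OF m] Linv_apply_diff[OF m]
      by (simp add: algebra_simps)
    then have "\<bar>Uh m - fp_iter f tau p tn dt un (Suc K) m\<bar> = dt / 2 * \<bar>Linv_apply tau p ?dF m\<bar>"
      using dt_pos by (simp add: abs_mult)
    also have "\<dots> \<le> dt / 2 * (\<kappa> * (2 * (Lc * (P * A * ?e) * A)))"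
      using Linv_le_\<kappa> Fvec_lipschitz[OF Suc.IH] m dt_pos by (intro mult_left_mono) auto
    also have "\<dots> = dt * (contraction * ?e)" by (simp add: contraction_def algebra_simps)
    also have "\<dots> \<le> h * (contraction * ?e)"
    proof (rule mult_right_mono)
      have "0 \<le> ?e" using Suc.IH abs_ge_zero order_trans by blast
      then show "0 \<le> contraction * ?e"
        unfolding contraction_def using \<kappa>_nonneg Lc_nonneg A_nonneg by simp
    qed (use dt_le_h in simp)
    also have "\<dots> = C_iter (Suc K) * h ^ (Suc K + 2)" by (simp add: C_iter_def algebra_simps)
    finally show ?thesis .
  qed
  then show ?case by blast
qed

end

end

theorem lemma3:
  fixes p K :: nat and T u0 :: real and f :: "real \<Rightarrow> real \<Rightarrow> real" and u :: "real \<Rightarrow> real"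
    and tau omega :: "nat \<Rightarrow> real"
  assumes T_pos: "T > 0"
    and f_smooth: "Ck (2 * p + 1) (\<lambda>(t, x). f t x)"
    and f_lip: "\<exists>Lc. \<forall>t x y. \<bar>f t x - f t y\<bar> \<le> Lc * \<bar>x - y\<bar>"
    and u_init: "u 0 = u0"
    and u_ode: "\<forall>s\<in>{0..T}. (u has_real_derivative f s (u s)) (at s within {0..T})"
    and tau_mono: "\<forall>i<p. tau i < tau (Suc i)"
    and tau_first: "-1 < tau 0"
    and tau_last: "tau p = 1"
    and radau_exact: "\<forall>g :: real poly. degree g \<le> 2 * p \<longrightarrow>
                        integral {-1..1} (poly g) = (\<Sum>j\<le>p. omega j * poly g (tau j))"
  shows "\<exists>C h0. h0 > 0 \<and>
     (\<forall>N t. t 0 = 0 \<and> t N = T \<and> (\<forall>n<N. t n < t (Suc n)) \<and> mesh N t \<le> h0 \<longrightarrow>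
        (\<forall>n<N. \<forall>Uh. dg_solution f tau p (t n) (t (Suc n) - t n) (u (t n)) Uh \<longrightarrow>
           (\<forall>m\<le>p. \<bar>Uh m - fp_iter f tau p (t n) (t (Suc n) - t n) (u (t n)) K m\<bar>
                    \<le> C * mesh N t ^ (K + 2))))"
proof -
  \<comment> \<open>\<open>F\<close> is integrated exactly.\<close>
  interpret radau_nodes tau p using tau_mono tau_first tau_last by unfold_locales
  obtain Lc where Lc: "\<forall>t x y. \<bar>f t x - f t y\<bar> \<le> Lc * \<bar>x - y\<bar>" using f_lip by blast
  then have Lc': "\<forall>t x y. \<bar>f t x - f t y\<bar> \<le> max Lc 0 * \<bar>x - y\<bar>"
    by (meson abs_ge_zero max.cobounded1 mult_right_mono order_trans)
  have f_cont: "continuous_on UNIV (\<lambda>(t, x). f t x)" using f_smooth by (rule Ck_imp_continuous_on)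
  obtain R0 F0 where "0 \<le> F0" and uf: "\<forall>s\<in>{0..T}. \<bar>u s\<bar> \<le> R0 \<and> \<bar>f s (u s)\<bar> \<le> F0"
    using ode_solution_bounds[OF f_cont u_ode] by blast
  obtain M where "M \<ge> 0" and M: "\<forall>t s x. 0 \<le> t \<longrightarrow> t \<le> s \<longrightarrow> s \<le> T \<longrightarrow> \<bar>x\<bar> \<le> R0 \<longrightarrow> \<bar>f s x - f t x\<bar> \<le> M * (s - t)"
    using Ck_Suc_lipschitz_in_time[of "2 * p" f 0 T R0] f_smooth unfolding Suc_eq_plus1 by blast
  obtain A \<kappa> where "A \<ge> 0" "\<forall>j\<le>p. \<forall>x\<in>{-1..1}. \<bar>lag tau p j x\<bar> \<le> A" "\<kappa> \<ge> 0"
    "\<forall>r R m. (\<forall>i\<le>p. \<bar>r i\<bar> \<le> R) \<longrightarrow> m \<le> p \<longrightarrow> \<bar>Linv_apply tau p r m\<bar> \<le> \<kappa> * R"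
    using lag_bounded Linv_apply_bounded by blast
  with Lc' f_cont \<open>0 \<le> F0\<close> \<open>M \<ge> 0\<close> interpret dg_iteration tau p f "max Lc 0" A \<kappa> F0 M
    by unfold_locales auto
  show ?thesis
  proof (intro exI conjI allI impI)
    fix N t n Uh m
    assume part: "t 0 = 0 \<and> t N = T \<and> (\<forall>n<N. t n < t (Suc n)) \<and> mesh N t \<le> h_max"
      and n: "n < N" and dg: "dg_solution f tau p (t n) (t (Suc n) - t n) (u (t n)) Uh" and m: "m \<le> p"
    note step = partition_step_bounds[of t N T n]
    have "t n \<in> {0..T}" using step part n by auto
    then have "\<bar>u (t n)\<bar> \<le> R0" "\<bar>f (t n) (u (t n))\<bar> \<le> F0" using uf by auto
    then have "\<forall>s\<in>{t n..t n + (t (Suc n) - t n)}. \<bar>f s (u (t n)) - f (t n) (u (t n))\<bar> \<le> M * (s - t n)"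
      using M step part n by auto
    with step part n \<open>\<bar>f (t n) (u (t n))\<bar> \<le> F0\<close> show "\<bar>Uh m - fp_iter f tau p (t n) (t (Suc n) - t n) (u (t n)) K m\<bar>
        \<le> C_iter K * mesh N t ^ (K + 2)"
      using fp_iter_error[OF _ _ _ _ _ dg] m by simp
  qed (rule h_max_pos)
qed

end
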